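(* Let $\mathcal{M}$ with $H\ge5$, deterministic expert $\pi^{\operatorname{E}}$ and abstractions $\{\phi_h\}$ satisfy the bisimulation and $\pi^{\operatorname{E}}$-irrelevance assumption in the context. Let $\mathcal{D}$ be $m$ i.i.d. expert trajectories, divided into disjoint $\mathcal{D}_1,\mathcal{D}_1^c$ with $|\mathcal{D}_1|=|\mathcal{D}_1^c|=m/2$. Let $\pi'^{\phi}$ be the abstract BC policy on $\mathcal{D}_1$, and, with $\pi'^\phi$ fixed, let $\mathcal{D}'_{\mathrm{env}}$ be $n'$ trajectories collected by $[\pi'^\phi]^M$. Fix $\varepsilon,\delta\in(0,1)$ and let $\widetilde d^\phi_h$ be the abstract estimator defined in the context. If $m\gtrsim\frac{H^{3/2}|\Phi|}{\varepsilon}\log\big(\frac{|\Phi|H}{\delta}\big)$ and $n'\gtrsim\frac{H^2|\Phi|}{\varepsilon^2}\log\big(\frac{|\Phi|H}{\delta}\big)$, then with probability at least $1-\delta$, $\sum_{h=1}^H\|\widetilde d^\phi_h-d_h^{\pi^{\operatorname{E}},\phi}\|_1\le\varepsilon$.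
   Context: Episodic MDP $(\mathcal{S},\mathcal{A},P,r,H,\rho)$, finite spaces, $r_h\in[0,1]$; trajectories $\operatorname{tr}=(s_1,a_1,\dots,s_H,a_H)$, $\operatorname{tr}_h=(s_1,a_1,\dots,s_h,a_h)$; $d_h^\pi(s,a)$ is the step-$h$ state-action distribution. Abstractions $\phi_h:\mathcal{S}\to\Phi$, $\Phi$ finite, $\phi_h^{-1}(x)=\{s:\phi_h(s)=x\}$. Assumption: for all $h$ and $s^1,s^2$ with $\phi_h(s^1)=\phi_h(s^2)$, for all $a,x'$: $r_h(s^1,a)=r_h(s^2,a)$, $\sum_{s'\in\phi_{h+1}^{-1}(x')}P_h(s'|s^1,a)=\sum_{s'\in\phi_{h+1}^{-1}(x')}P_h(s'|s^2,a)$, and $\pi^{\operatorname{E}}_h(s^1)=\pi^{\operatorname{E}}_h(s^2)$. $d_h^{\pi^{\operatorname{E}},\phi}(x,a)=\sum_{s\in\phi_h^{-1}(x)}d_h^{\pi^{\operatorname{E}}}(s,a)$. Abstract BC policy: $\pi'^\phi_h(a|x)=n_h^1(x,a)/n_h^1(x)$ if $n_h^1(x)>0$ and $1/|\mathcal{A}|$ otherwise, where $n_h^1(x,a)$ (resp. $n_h^1(x)$) is the number of trajectories in $\mathcal{D}_1$ with $\phi_h(s_h)=x,a_h=a$ (resp. $\phi_h(s_h)=x$); lift $[\pi^\phi]^M_h(a|s)=\pi^\phi_h(a|\phi_h(s))$. $\Phi_h(\mathcal{D}_1)=\{\phi_h(s_h):\operatorname{tr}\in\mathcal{D}_1\}$,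 $\mathbf{Tr}_h^{\mathcal{D}_1,\phi}=\{(s_1,a_1,\dots,s_h,a_h):\phi_\ell(s_\ell)\in\Phi_\ell(\mathcal{D}_1)\ \forall\ell\le h\}$. Estimator: $\widetilde d^\phi_h(x,a)=\frac1{n'}\sum_{\operatorname{tr}\in\mathcal{D}'_{\mathrm{env}}}\mathbb{I}\{\phi_h(s_h)=x,a_h=a,\operatorname{tr}_h\in\mathbf{Tr}_h^{\mathcal{D}_1,\phi}\}+\frac{2}{m}\sum_{\operatorname{tr}\in\mathcal{D}_1^c}\mathbb{I}\{\phi_h(s_h)=x,a_h=a,\operatorname{tr}_h\notin\mathbf{Tr}_h^{\mathcal{D}_1,\phi}\}$. $a\gtrsim b$ means $a\ge Cb$ for a sufficiently large universal constant $C$. *)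

theory Defs
  imports "HOL-Probability.Probability"
begin

text \<open>
  States, actions and abstract states are natural numbers drawn from
  finite carrier sets S, A and X (= Phi). Steps are h = 1..H. A trajectory is a list
  of state-action pairs of length H; its (h-1)-th entry (0-based) is (s_h, a_h).
  A (Markov, possibly stochastic) policy is pi :: nat => nat => nat pmf (step, state);
  the transition kernel is P :: nat => nat => nat => nat pmf (step, state, action);
  the initial distribution is rho :: nat pmf.
\<close>

type_synonym traj = "(nat \<times> nat) list"

fun gen_traj :: "(nat \<Rightarrow> nat \<Rightarrow> nat \<Rightarrow> nat pmf) \<Rightarrow> (nat \<Rightarrow> nat \<Rightarrow> nat pmf)
                 \<Rightarrow> nat \<Rightarrow> nat \<Rightarrow> nat \<Rightarrow> traj pmf" where
  "gen_traj P pol h 0 s = return_pmf []"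
| "gen_traj P pol h (Suc k) s =
     do { a \<leftarrow> pol h s; s' \<leftarrow> P h s a; rest \<leftarrow> gen_traj P pol (Suc h) k s';
          return_pmf ((s, a) # rest) }"

definition traj_dist :: "nat pmf \<Rightarrow> (nat \<Rightarrow> nat \<Rightarrow> nat \<Rightarrow> nat pmf) \<Rightarrow> (nat \<Rightarrow> nat \<Rightarrow> nat pmf)
                          \<Rightarrow> nat \<Rightarrow> traj pmf" where
  "traj_dist \<rho> P pol H = do { s \<leftarrow> \<rho>; gen_traj P pol 1 H s }"

definition occ :: "nat pmf \<Rightarrow> (nat \<Rightarrow> nat \<Rightarrow> nat \<Rightarrow> nat pmf) \<Rightarrow> (nat \<Rightarrow> nat \<Rightarrow> nat pmf)
                    \<Rightarrow> nat \<Rightarrow> nat \<Rightarrow> nat \<Rightarrow> nat \<Rightarrow> real" where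
  "occ \<rho> P pol H h s a = measure_pmf.prob (traj_dist \<rho> P pol H) {tr. tr ! (h - 1) = (s, a)}"

definition det_policy :: "(nat \<Rightarrow> nat \<Rightarrow> nat) \<Rightarrow> nat \<Rightarrow> nat \<Rightarrow> nat pmf" where
  "det_policy \<pi> h s = return_pmf (\<pi> h s)"

definition abs_occ :: "nat set \<Rightarrow> nat pmf \<Rightarrow> (nat \<Rightarrow> nat \<Rightarrow> nat \<Rightarrow> nat pmf) \<Rightarrow> (nat \<Rightarrow> nat \<Rightarrow> nat)
                        \<Rightarrow> (nat \<Rightarrow> nat \<Rightarrow> nat) \<Rightarrow> nat \<Rightarrow> nat \<Rightarrow> nat \<Rightarrow> nat \<Rightarrow> real" where
  "abs_occ S \<rho> P \<pi>E \<phi> H h x a =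
     (\<Sum>s\<in>{s\<in>S. \<phi> h s = x}. occ \<rho> P (det_policy \<pi>E) H h s a)"

definition cnt_xa :: "(nat \<Rightarrow> nat \<Rightarrow> nat) \<Rightarrow> traj list \<Rightarrow> nat \<Rightarrow> nat \<Rightarrow> nat \<Rightarrow> nat" where
  "cnt_xa \<phi> D h x a = length (filter (\<lambda>tr. \<phi> h (fst (tr ! (h - 1))) = x \<and> snd (tr ! (h - 1)) = a) D)"

definition cnt_x :: "(nat \<Rightarrow> nat \<Rightarrow> nat) \<Rightarrow> traj list \<Rightarrow> nat \<Rightarrow> nat \<Rightarrow> nat" where
  "cnt_x \<phi> D h x = length (filter (\<lambda>tr. \<phi> h (fst (tr ! (h - 1))) = x) D)"

definition abs_bc :: "nat set \<Rightarrow> (nat \<Rightarrow> nat \<Rightarrow> nat) \<Rightarrow> traj list \<Rightarrow> nat \<Rightarrow> nat \<Rightarrow> nat pmf" where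
  "abs_bc A \<phi> D h x =
     (if cnt_x \<phi> D h x > 0
      then pmf_of_multiset (mset (map (\<lambda>tr. snd (tr ! (h - 1)))
                                 (filter (\<lambda>tr. \<phi> h (fst (tr ! (h - 1))) = x) D)))
      else pmf_of_set A)"

definition lift_policy :: "(nat \<Rightarrow> nat \<Rightarrow> nat pmf) \<Rightarrow> (nat \<Rightarrow> nat \<Rightarrow> nat) \<Rightarrow> nat \<Rightarrow> nat \<Rightarrow> nat pmf" where
  "lift_policy \<pi> \<phi> h s = \<pi> h (\<phi> h s)"

definition in_Tr :: "(nat \<Rightarrow> nat \<Rightarrow> nat) \<Rightarrow> traj list \<Rightarrow> nat \<Rightarrow> traj \<Rightarrow> bool" where
  "in_Tr \<phi> D1 h tr =
     (\<forall>l\<in>{1..h}. \<phi> l (fst (tr ! (l - 1))) \<in> {\<phi> l (fst (tr' ! (l - 1))) | tr'. tr' \<in> set D1})"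

text \<open>The estimator tilde d_h^phi(x,a) with n' = |Denv| and m = total number of expert trajectories.\<close>
definition est :: "(nat \<Rightarrow> nat \<Rightarrow> nat) \<Rightarrow> nat \<Rightarrow> traj list \<Rightarrow> traj list \<Rightarrow> traj list
                    \<Rightarrow> nat \<Rightarrow> nat \<Rightarrow> nat \<Rightarrow> real" where
  "est \<phi> m D1 D1c Denv h x a =
     (1 / real (length Denv)) *
       real (length (filter (\<lambda>tr. \<phi> h (fst (tr ! (h - 1))) = x \<and> snd (tr ! (h - 1)) = a
                                  \<and> in_Tr \<phi> D1 h tr) Denv))
   + (2 / real m) *
       real (length (filter (\<lambda>tr. \<phi> h (fst (tr ! (h - 1))) = x \<and> snd (tr ! (h - 1)) = a
                                  \<and> \<not> in_Tr \<phi> D1 h tr) D1c))"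

text \<open>Joint law of (D1, D1^c, D'_env): D1 and D1^c are m/2 i.i.d. expert trajectories each
  (disjoint halves of D), and given D1, D'_env consists of n' i.i.d. trajectories of the
  lifted abstract BC policy trained on D1.\<close>
definition sample_law :: "nat set \<Rightarrow> nat pmf \<Rightarrow> (nat \<Rightarrow> nat \<Rightarrow> nat \<Rightarrow> nat pmf) \<Rightarrow> (nat \<Rightarrow> nat \<Rightarrow> nat)
                          \<Rightarrow> (nat \<Rightarrow> nat \<Rightarrow> nat) \<Rightarrow> nat \<Rightarrow> nat \<Rightarrow> nat
                          \<Rightarrow> (traj list \<times> traj list \<times> traj list) pmf" where
  "sample_law A \<rho> P \<pi>E \<phi> H m n' =
     do { D1 \<leftarrow> replicate_pmf (m div 2) (traj_dist \<rho> P (det_policy \<pi>E) H);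
          D1c \<leftarrow> replicate_pmf (m div 2) (traj_dist \<rho> P (det_policy \<pi>E) H);
          Denv \<leftarrow> replicate_pmf n' (traj_dist \<rho> P (lift_policy (abs_bc A \<phi> D1) \<phi>) H);
          return_pmf (D1, D1c, Denv) }"

definition valid_setting :: "nat set \<Rightarrow> nat set \<Rightarrow> nat set \<Rightarrow> nat pmf \<Rightarrow> (nat \<Rightarrow> nat \<Rightarrow> nat \<Rightarrow> nat pmf)
                         \<Rightarrow> (nat \<Rightarrow> nat \<Rightarrow> nat \<Rightarrow> real) \<Rightarrow> (nat \<Rightarrow> nat \<Rightarrow> nat) \<Rightarrow> (nat \<Rightarrow> nat \<Rightarrow> nat)
                         \<Rightarrow> nat \<Rightarrow> bool" where
  "valid_setting S A X \<rho> P r \<pi>E \<phi> H \<longleftrightarrow>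
     finite S \<and> S \<noteq> {} \<and> finite A \<and> A \<noteq> {} \<and> finite X \<and> X \<noteq> {} \<and>
     set_pmf \<rho> \<subseteq> S \<and>
     (\<forall>h\<in>{1..H}. \<forall>s\<in>S. \<forall>a\<in>A. set_pmf (P h s a) \<subseteq> S) \<and>
     (\<forall>h\<in>{1..H}. \<forall>s\<in>S. \<forall>a\<in>A. 0 \<le> r h s a \<and> r h s a \<le> 1) \<and>
     (\<forall>h\<in>{1..H}. \<forall>s\<in>S. \<pi>E h s \<in> A) \<and>
     (\<forall>h\<in>{1..Suc H}. \<forall>s\<in>S. \<phi> h s \<in> X) \<and>
     (\<forall>h\<in>{1..H}. \<forall>s1\<in>S. \<forall>s2\<in>S. \<phi> h s1 = \<phi> h s2 \<longrightarrow>
        (\<forall>a\<in>A. r h s1 a = r h s2 a \<and>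
           (\<forall>x'\<in>X. (\<Sum>s'\<in>{s'\<in>S. \<phi> (Suc h) s' = x'}. pmf (P h s1 a) s')
                  = (\<Sum>s'\<in>{s'\<in>S. \<phi> (Suc h) s' = x'}. pmf (P h s2 a) s'))) \<and>
        \<pi>E h s1 = \<pi>E h s2)"

definition total_err :: "nat set \<Rightarrow> nat set \<Rightarrow> nat set \<Rightarrow> nat pmf \<Rightarrow> (nat \<Rightarrow> nat \<Rightarrow> nat \<Rightarrow> nat pmf)
                         \<Rightarrow> (nat \<Rightarrow> nat \<Rightarrow> nat) \<Rightarrow> (nat \<Rightarrow> nat \<Rightarrow> nat) \<Rightarrow> nat \<Rightarrow> nat
                         \<Rightarrow> traj list \<Rightarrow> traj list \<Rightarrow> traj list \<Rightarrow> real" where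
  "total_err S A X \<rho> P \<pi>E \<phi> H m D1 D1c Denv =
     (\<Sum>h=1..H. \<Sum>x\<in>X. \<Sum>a\<in>A. \<bar>est \<phi> m D1 D1c Denv h x a - abs_occ S \<rho> P \<pi>E \<phi> H h x a\<bar>)"

end

theory Submission
  imports Defs
begin

text \<open>
  Split the abstract expert occupancy d_h(x, a) according to whether the prefix tr_h stays in
  Tr_h, i.e. visits only abstract states already seen in D1. On those states the lifted BC
  policy plays the unique expert action, so up to the first exit from Tr a trajectory has the
  same law under BC as under the expert. Hence the first term of the estimator is a count whose
  mean is the part of d_h inside Tr_h, and the second one a count on the independent half D1^c
  whose mean is the part outside. A Chernoff bound |c - n q| \<le> \<beta> n q + L / \<beta>, needed only
  for the at most H |\<Phi>| triples (h, x, a) of positive mass (the expert is deterministic on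
  abstract states), bounds the two errors by H (\<beta>1 + |\<Phi>| L / (\<beta>1 n')) and
  H (\<beta>2 P(tr_h \<notin> Tr_h) + |\<Phi>| L / (\<beta>2 m/2)). The escaping mass is small: with probability
  1 - H |\<Phi>| exp (-L) every abstract state of occupancy at least \<tau> = L / (m/2) is seen in D1,
  and then P(tr_h \<notin> Tr_h) \<le> H |\<Phi>| \<tau>. Taking \<beta>1 = \<epsilon> / (4 H), \<beta>2 = 1 / sqrt H and
  L = ln (5 |\<Phi>| H / \<delta>) makes each error at most \<epsilon> / 2 and the failure probability \<delta>,
  with C = 32.
\<close>

section \<open>Concentration of counts\<close>

lemma exp_le_one_plus_plus_square:
  fixes s :: real
  assumes "\<bar>s\<bar> \<le> 1"
  shows "exp s \<le> 1 + s + s\<^sup>2"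
proof (cases "s \<ge> 0")
  case True
  then show ?thesis using exp_bound[of s] assms by auto
next
  case False
  have pos: "0 < 1 - s" using False by simp
  have "exp s = 1 / exp (-s)" by (simp add: exp_minus field_simps)
  also have "\<dots> \<le> 1 / (1 - s)"
    using exp_ge_add_one_self[of "-s"] pos by (intro divide_left_mono) auto
  also have "\<dots> \<le> 1 + s + s\<^sup>2"
  proof -
    have "(1 - s) * (1 + s + s\<^sup>2) = 1 - s ^ 3"
      by (simp add: algebra_simps power2_eq_square power3_eq_cube)
    moreover have "s ^ 3 < 0" using False by simp
    ultimately show ?thesis using pos by (simp add: divide_le_eq mult.commute)
  qed
  finally show ?thesis .
qed

lemma binomial_pmf_mgf:
  assumes q: "q \<in> {0..1}"
  shows "(\<integral>k. exp (s * real k) \<partial>binomial_pmf n q) = (1 - q + q * exp s) ^ n"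
proof -
  have "(\<integral>k. exp (s * real k) \<partial>binomial_pmf n q) = (\<Sum>k\<le>n. exp (s * real k) * pmf (binomial_pmf n q) k)"
    using q by (intro integral_measure_pmf_real) (auto simp: set_pmf_binomial_eq split: if_splits)
  also have "\<dots> = (\<Sum>k\<le>n. of_nat (n choose k) * (q * exp s) ^ k * (1 - q) ^ (n - k))"
    using q by (intro sum.cong refl)
      (simp add: power_mult_distrib exp_of_nat_mult[symmetric] mult.commute mult.left_commute)
  also have "\<dots> = (q * exp s + (1 - q)) ^ n" by (simp add: binomial_ring)
  finally show ?thesis by (simp add: add.commute)
qed

lemma binomial_pmf_signed_tail:
  assumes q: "q \<in> {0..1}" and s: "\<bar>s\<bar> \<le> 1"
  shows "measure_pmf.prob (binomial_pmf n q) {k. s\<^sup>2 * n * q + L \<le> s * (real k - n * q)} \<le> exp (- L)"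
proof -
  let ?M = "measure_pmf (binomial_pmf n q)"
  let ?c = "exp (s * n * q + s\<^sup>2 * n * q + L)"
  have event: "{k. s\<^sup>2 * n * q + L \<le> s * (real k - n * q)} = {k \<in> space ?M. ?c \<le> exp (s * real k)}"
    by (auto simp: algebra_simps)
  have "measure ?M {k \<in> space ?M. ?c \<le> exp (s * real k)} \<le> (\<integral>k. exp (s * real k) \<partial>?M) / ?c"
    using q by (intro integral_Markov_inequality_measure integrable_measure_pmf_finite) auto
  also have "(\<integral>k. exp (s * real k) \<partial>?M) = (1 - q + q * exp s) ^ n"
    using binomial_pmf_mgf[OF q] .
  also have "\<dots> \<le> exp (q * (exp s - 1)) ^ n"
  proof (rule power_mono)
    show "1 - q + q * exp s \<le> exp (q * (exp s - 1))"
      using exp_ge_add_one_self[of "q * (exp s - 1)"] by (simp add: algebra_simps)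
    show "0 \<le> 1 - q + q * exp s"
      using q by auto
  qed
  also have "\<dots> = exp (n * q * (exp s - 1))"
    by (simp add: exp_of_nat_mult[symmetric] mult.assoc)
  also have "\<dots> \<le> exp (n * q * (s + s\<^sup>2))"
    using exp_le_one_plus_plus_square[OF s] q by (intro exp_mono mult_left_mono) auto
  finally have "measure ?M {k \<in> space ?M. ?c \<le> exp (s * real k)} \<le> exp (n * q * (s + s\<^sup>2)) / ?c"
    by (simp add: divide_right_mono)
  also have "\<dots> = exp (- L)" by (simp add: exp_diff[symmetric] algebra_simps)
  finally show ?thesis by (simp only: event)
qed

lemma binomial_pmf_deviation:
  assumes q: "q \<in> {0..1}" and \<beta>: "0 < \<beta>" "\<beta> \<le> 1"
  shows "measure_pmf.prob (binomial_pmf n q) {k. \<beta> * n * q + L / \<beta> < \<bar>real k - n * q\<bar>} \<le> 2 * exp (- L)"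
proof -
  let ?M = "binomial_pmf n q"
  let ?tail = "\<lambda>s::real. {k. s\<^sup>2 * n * q + L \<le> s * (real k - n * q)}"
  have scale: "\<beta> * (\<beta> * n * q + L / \<beta>) = \<beta>\<^sup>2 * n * q + L"
    using \<beta> by (simp add: field_simps power2_eq_square)
  have "{k. \<beta> * n * q + L / \<beta> < \<bar>real k - n * q\<bar>} \<subseteq> ?tail \<beta> \<union> ?tail (- \<beta>)"
  proof
    fix k assume "k \<in> {k. \<beta> * n * q + L / \<beta> < \<bar>real k - n * q\<bar>}"
    then have "\<beta> * (\<beta> * n * q + L / \<beta>) \<le> \<beta> * \<bar>real k - n * q\<bar>"
      using \<beta> by (intro mult_left_mono) auto
    then show "k \<in> ?tail \<beta> \<union> ?tail (- \<beta>)"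
      unfolding scale by (cases "real k - n * q \<ge> 0") (auto simp: algebra_simps)
  qed
  then have "measure_pmf.prob ?M {k. \<beta> * n * q + L / \<beta> < \<bar>real k - n * q\<bar>}
      \<le> measure_pmf.prob ?M (?tail \<beta> \<union> ?tail (- \<beta>))"
    by (intro measure_pmf.finite_measure_mono) auto
  also have "\<dots> \<le> measure_pmf.prob ?M (?tail \<beta>) + measure_pmf.prob ?M (?tail (- \<beta>))"
    by (rule measure_subadditive) auto
  also have "\<dots> \<le> exp (- L) + exp (- L)"
    using \<beta> by (intro add_mono binomial_pmf_signed_tail[OF q]) auto
  finally show ?thesis by simp
qed

lemma replicate_pmf_map_pmf: "replicate_pmf n (map_pmf f p) = map_pmf (map f) (replicate_pmf n p)"
  by (induction n) (auto simp: map_pmf_def bind_assoc_pmf bind_return_pmf)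

lemma map_pmf_eq_bernoulli_pmf: "map_pmf Q p = bernoulli_pmf (measure_pmf.prob p {x. Q x})"
proof (rule pmf_eqI)
  fix b
  have "Q -` {False} = UNIV - {x. Q x}" by auto
  then have "measure_pmf.prob p (Q -` {False}) = 1 - measure_pmf.prob p {x. Q x}"
    using measure_pmf.prob_compl[of "{x. Q x}" p] by (simp add: Compl_eq_Diff_UNIV)
  then show "pmf (map_pmf Q p) b = pmf (bernoulli_pmf (measure_pmf.prob p {x. Q x})) b"
    by (cases b) (auto simp: pmf_map vimage_def)
qed

lemma map_pmf_count_replicate_pmf:
  "map_pmf (\<lambda>xs. length (filter Q xs)) (replicate_pmf n p) = binomial_pmf n (measure_pmf.prob p {x. Q x})"
  by (simp add: binomial_pmf_altdef replicate_pmf_map_pmf map_pmf_eq_bernoulli_pmf[symmetric]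
      pmf.map_comp o_def filter_map)

lemma prob_replicate_pmf_never_le:
  "measure_pmf.prob (replicate_pmf n p) {xs. \<forall>x\<in>set xs. \<not> Q x} \<le> exp (- measure_pmf.prob p {x. Q x} * n)"
proof -
  let ?q = "measure_pmf.prob p {x. Q x}"
  have "{xs. \<forall>x\<in>set xs. \<not> Q x} = (\<lambda>xs. length (filter Q xs)) -` {0}"
    by (auto simp: filter_empty_conv)
  then have "measure_pmf.prob (replicate_pmf n p) {xs. \<forall>x\<in>set xs. \<not> Q x}
      = measure_pmf.prob (map_pmf (\<lambda>xs. length (filter Q xs)) (replicate_pmf n p)) {0}"
    by simp
  also have "\<dots> = (1 - ?q) ^ n"
    by (simp add: map_pmf_count_replicate_pmf measure_pmf_single)
  also have "\<dots> \<le> exp (- ?q) ^ n"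
    using exp_ge_add_one_self[of "- ?q"] by (intro power_mono) auto
  also have "\<dots> = exp (- ?q * n)" by (simp add: exp_of_nat_mult[symmetric] mult.commute)
  finally show ?thesis .
qed

definition count_close :: "real \<Rightarrow> real \<Rightarrow> nat \<Rightarrow> real \<Rightarrow> nat \<Rightarrow> bool" where
  "count_close \<beta> L n q c \<longleftrightarrow> (if q = 0 then c = 0 else \<bar>real c - n * q\<bar> \<le> \<beta> * n * q + L / \<beta>)"

definition counts_close :: "real \<Rightarrow> real \<Rightarrow> 'i set \<Rightarrow> ('i \<Rightarrow> 'a \<Rightarrow> bool) \<Rightarrow> 'a pmf \<Rightarrow> 'a list \<Rightarrow> bool" where
  "counts_close \<beta> L I Q M D \<longleftrightarrow>
     (\<forall>i\<in>I. count_close \<beta> L (length D) (measure_pmf.prob M {x. Q i x}) (length (filter (Q i) D)))"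

lemma prob_not_count_close:
  assumes "0 < \<beta>" "\<beta> \<le> 1"
  shows "measure_pmf.prob (replicate_pmf n p)
      {xs. \<not> count_close \<beta> L n (measure_pmf.prob p {x. Q x}) (length (filter Q xs))}
    \<le> (if measure_pmf.prob p {x. Q x} = 0 then 0 else 2 * exp (- L))"
proof -
  let ?q = "measure_pmf.prob p {x. Q x}"
  have "measure_pmf.prob (replicate_pmf n p) {xs. \<not> count_close \<beta> L n ?q (length (filter Q xs))}
      = measure_pmf.prob (binomial_pmf n ?q) {k. \<not> count_close \<beta> L n ?q k}"
    by (simp flip: map_pmf_count_replicate_pmf add: vimage_def)
  also have "\<dots> \<le> (if ?q = 0 then 0 else 2 * exp (- L))"
  proof (cases "?q = 0")
    case True
    then show ?thesis unfolding True by (simp add: count_close_def measure_le_0_iff measure_pmf_zero_iff)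
  next
    case False
    then show ?thesis
      using binomial_pmf_deviation[OF _ assms, of ?q n L] by (simp add: count_close_def not_le)
  qed
  finally show ?thesis .
qed

lemma count_close_imp_abs_diff_le:
  assumes "count_close \<beta> L n q c" "0 < n" "0 < \<beta>"
  shows "\<bar>real c / n - q\<bar> \<le> (if q = 0 then 0 else \<beta> * q + L / (\<beta> * n))"
proof (cases "q = 0")
  case False
  then have "\<bar>real c - n * q\<bar> / n \<le> (\<beta> * n * q + L / \<beta>) / n"
    using assms by (intro divide_right_mono) (auto simp: count_close_def)
  moreover have "\<bar>real c - n * q\<bar> / n = \<bar>real c / n - q\<bar>"
    using assms(2) by (simp add: field_simps)
  ultimately show ?thesis
    using False assms(2,3) by (simp add: field_simps)
qed (use assms in \<open>simp add: count_close_def\<close>)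

lemma prob_not_counts_close:
  assumes "finite I" "0 < \<beta>" "\<beta> \<le> 1" "card {i\<in>I. measure_pmf.prob M {x. Q i x} \<noteq> 0} \<le> N"
  shows "measure_pmf.prob (replicate_pmf n M) {D. \<not> counts_close \<beta> L I Q M D} \<le> 2 * real N * exp (- L)"
proof -
  let ?q = "\<lambda>i. measure_pmf.prob M {x. Q i x}"
  let ?fail = "\<lambda>i. {D. \<not> count_close \<beta> L n (?q i) (length (filter (Q i) D))}"
  have "measure_pmf.prob (replicate_pmf n M) {D. \<not> counts_close \<beta> L I Q M D}
      = measure_pmf.prob (replicate_pmf n M) (\<Union>i\<in>I. ?fail i)"
    by (intro measure_pmf.finite_measure_eq_AE AE_pmfI) (auto simp: counts_close_def set_replicate_pmf)
  also have "\<dots> \<le> (\<Sum>i\<in>I. measure_pmf.prob (replicate_pmf n M) (?fail i))"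
    using assms(1) by (intro measure_pmf.finite_measure_subadditive_finite) auto
  also have "\<dots> \<le> (\<Sum>i\<in>I. if ?q i = 0 then 0 else 2 * exp (- L))"
    by (intro sum_mono prob_not_count_close assms(2,3))
  also have "\<dots> = 2 * real (card {i\<in>I. ?q i \<noteq> 0}) * exp (- L)"
    using assms(1) by (simp add: sum.If_cases Int_def)
  also have "\<dots> \<le> 2 * real N * exp (- L)"
    using assms(4) by simp
  finally show ?thesis .
qed

lemma measure_pmf_bind_le:
  assumes "\<And>x. x \<in> set_pmf M \<Longrightarrow> measure_pmf.prob (f x) A \<le> c" "0 \<le> c"
  shows "measure_pmf.prob (bind_pmf M f) A \<le> c"
proof -
  have "emeasure (measure_pmf (bind_pmf M f)) A = (\<integral>\<^sup>+x. emeasure (measure_pmf (f x)) A \<partial>measure_pmf M)"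
    by simp
  also have "\<dots> \<le> (\<integral>\<^sup>+x. ennreal c \<partial>measure_pmf M)"
    using assms by (intro nn_integral_mono_AE)
      (auto simp: AE_measure_pmf_iff measure_pmf.emeasure_eq_measure)
  also have "\<dots> = ennreal c" by (simp add: measure_pmf.emeasure_space_1)
  finally show ?thesis using assms(2) by (simp add: measure_pmf.emeasure_eq_measure)
qed

lemma prob_bind3_union_le:
  assumes "measure_pmf.prob M {x. E1 x} \<le> a"
    and "\<And>x. x \<in> set_pmf M \<Longrightarrow> measure_pmf.prob N {y. E2 x y} \<le> b"
    and "\<And>x. x \<in> set_pmf M \<Longrightarrow> measure_pmf.prob (K x) {z. E3 x z} \<le> c"
    and "0 \<le> b" "0 \<le> c"
  shows "measure_pmf.prob (M \<bind> (\<lambda>x. N \<bind> (\<lambda>y. K x \<bind> (\<lambda>z. return_pmf (x, y, z)))))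
      {(x, y, z). E1 x \<or> E2 x y \<or> E3 x z} \<le> a + (b + c)"
proof -
  define T where "T x = N \<bind> (\<lambda>y. K x \<bind> (\<lambda>z. return_pmf (x, y, z)))" for x
  let ?E23 = "{t. E2 (fst t) (fst (snd t)) \<or> E3 (fst t) (snd (snd t))}"
  have "measure_pmf.prob (M \<bind> T) {(x, y, z). E1 x \<or> E2 x y \<or> E3 x z}
      \<le> measure_pmf.prob (M \<bind> T) (fst -` {x. E1 x}) + measure_pmf.prob (M \<bind> T) ?E23"
    by (rule order_trans[OF _ measure_Un_le]) (auto intro!: measure_pmf.finite_measure_mono)
  also have "measure_pmf.prob (M \<bind> T) (fst -` {x. E1 x}) = measure_pmf.prob M {x. E1 x}"
  proof -
    have "map_pmf fst (M \<bind> T) = M" by (simp add: T_def map_bind_pmf bind_return_pmf')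
    then show ?thesis by (metis measure_map_pmf)
  qed
  also have "measure_pmf.prob (M \<bind> T) ?E23 \<le> b + c"
  proof (rule measure_pmf_bind_le)
    fix x assume x: "x \<in> set_pmf M"
    have "measure_pmf.prob (T x) ?E23
        \<le> measure_pmf.prob (T x) ((fst \<circ> snd) -` {y. E2 x y}) + measure_pmf.prob (T x) ((snd \<circ> snd) -` {z. E3 x z})"
      by (rule order_trans[OF _ measure_Un_le])
        (auto simp: T_def intro!: measure_pmf.finite_measure_mono_AE AE_pmfI)
    also have "\<dots> = measure_pmf.prob N {y. E2 x y} + measure_pmf.prob (K x) {z. E3 x z}"
    proof -
      have "map_pmf (fst \<circ> snd) (T x) = N" "map_pmf (snd \<circ> snd) (T x) = K x"
        by (simp_all add: T_def map_bind_pmf bind_return_pmf')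
      then show ?thesis by (metis measure_map_pmf)
    qed
    finally show "measure_pmf.prob (T x) ?E23 \<le> b + c"
      using assms(2,3)[OF x] by linarith
  qed (use assms in simp)
  finally show ?thesis using assms(1) by (simp add: T_def)
qed

lemma measure_pmf_prob_preimage_eq_sum:
  assumes "finite B"
  shows "measure_pmf.prob M {t. f t \<in> B \<and> F t} = (\<Sum>b\<in>B. measure_pmf.prob M {t. f t = b \<and> F t})"
proof -
  have "{t. f t \<in> B \<and> F t} = (\<Union>b\<in>B. {t. f t = b \<and> F t})" by auto
  then show ?thesis
    using assms by (subst measure_pmf.finite_measure_finite_Union[symmetric])
      (auto simp: disjoint_family_on_def)
qed

lemma sum_abs_le_single_support:
  fixes q d :: "'x \<Rightarrow> 'a \<Rightarrow> real" and \<beta> c :: real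
  assumes "finite A" "0 \<le> c"
    and single: "\<And>x a. x \<in> X \<Longrightarrow> a \<noteq> act x \<Longrightarrow> q x a = 0"
    and dev: "\<And>x a. x \<in> X \<Longrightarrow> a \<in> A \<Longrightarrow> \<bar>d x a\<bar> \<le> (if q x a = 0 then 0 else \<beta> * q x a + c)"
  shows "(\<Sum>x\<in>X. \<Sum>a\<in>A. \<bar>d x a\<bar>) \<le> \<beta> * (\<Sum>x\<in>X. \<Sum>a\<in>A. q x a) + card X * c"
proof -
  have "(\<Sum>a\<in>A. \<bar>d x a\<bar>) \<le> \<beta> * (\<Sum>a\<in>A. q x a) + c" if x: "x \<in> X" for x
  proof -
    have "\<bar>d x a\<bar> \<le> \<beta> * q x a + (if a = act x then c else 0)" if a: "a \<in> A" for a
    proof (cases "a = act x")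
      case True
      then show ?thesis using dev[OF x a] assms(2) by (auto split: if_splits)
    next
      case False
      then show ?thesis using dev[OF x a] single[OF x False] by simp
    qed
    then have "(\<Sum>a\<in>A. \<bar>d x a\<bar>) \<le> (\<Sum>a\<in>A. \<beta> * q x a + (if a = act x then c else 0))"
      by (rule sum_mono)
    also have "\<dots> \<le> \<beta> * (\<Sum>a\<in>A. q x a) + c"
      using assms(1,2) by (simp add: sum.distrib sum_distrib_left)
    finally show ?thesis .
  qed
  then have "(\<Sum>x\<in>X. \<Sum>a\<in>A. \<bar>d x a\<bar>) \<le> (\<Sum>x\<in>X. \<beta> * (\<Sum>a\<in>A. q x a) + c)"
    by (rule sum_mono)
  then show ?thesis by (simp add: sum.distrib sum_distrib_left)
qed

section \<open>Trajectories\<close>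

lemma set_pmf_gen_traj_det_policy:
  assumes P: "\<forall>h\<in>{1..H}. \<forall>s\<in>S. \<forall>a\<in>A. set_pmf (P h s a) \<subseteq> S"
    and \<pi>: "\<forall>h\<in>{1..H}. \<forall>s\<in>S. \<pi> h s \<in> A"
  shows "s \<in> S \<Longrightarrow> 1 \<le> h0 \<Longrightarrow> h0 + n \<le> H + 1 \<Longrightarrow> tr \<in> set_pmf (gen_traj P (det_policy \<pi>) h0 n s) \<Longrightarrow>
    length tr = n \<and> (\<forall>i<n. fst (tr ! i) \<in> S \<and> snd (tr ! i) = \<pi> (h0 + i) (fst (tr ! i)))"
proof (induction n arbitrary: h0 s tr)
  case (Suc n)
  have "det_policy \<pi> h0 s = return_pmf (\<pi> h0 s)" by (simp add: det_policy_def)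
  with Suc.prems(4) obtain s' rest where s': "s' \<in> set_pmf (P h0 s (\<pi> h0 s))"
    and rest: "rest \<in> set_pmf (gen_traj P (det_policy \<pi>) (Suc h0) n s')"
    and tr: "tr = (s, \<pi> h0 s) # rest"
    by auto
  have "s' \<in> S" using P \<pi> Suc.prems s' by fastforce
  with Suc.IH[OF _ _ _ rest] Suc.prems have
    "length rest = n \<and> (\<forall>i<n. fst (rest ! i) \<in> S \<and> snd (rest ! i) = \<pi> (Suc h0 + i) (fst (rest ! i)))"
    by auto
  then show ?case using tr Suc.prems(1) by (auto simp: less_Suc_eq_0_disj)
qed simp

definition guarded_prefix :: "(nat \<Rightarrow> nat \<Rightarrow> bool) \<Rightarrow> nat \<Rightarrow> nat \<Rightarrow> traj \<Rightarrow> traj option" where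
  "guarded_prefix G h0 k tr = (if \<forall>i<k. G (h0 + i) (fst (tr ! i)) then Some (take k tr) else None)"

lemma guarded_prefix_Cons:
  "guarded_prefix G h0 (Suc k) ((s, a) # rest) =
     (if G h0 s then map_option (Cons (s, a)) (guarded_prefix G (Suc h0) k rest) else None)"
  by (auto simp: guarded_prefix_def less_Suc_eq_0_disj)

text \<open>The prefix is cut at the first unguarded state, and up to there both policies act alike.\<close>

lemma map_pmf_guarded_prefix_gen_traj_cong:
  assumes P: "\<forall>h\<in>{1..H}. \<forall>s\<in>S. \<forall>a\<in>A. set_pmf (P h s a) \<subseteq> S"
    and agree: "\<And>l s. l \<in> {1..H} \<Longrightarrow> s \<in> S \<Longrightarrow> G l s \<Longrightarrow> pol1 l s = pol2 l s"
    and actions: "\<And>l s. l \<in> {1..H} \<Longrightarrow> s \<in> S \<Longrightarrow> G l s \<Longrightarrow> set_pmf (pol1 l s) \<subseteq> A"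
  shows "s \<in> S \<Longrightarrow> 1 \<le> h0 \<Longrightarrow> h0 + n \<le> H + 1 \<Longrightarrow>
    map_pmf (guarded_prefix G h0 k) (gen_traj P pol1 h0 n s) =
    map_pmf (guarded_prefix G h0 k) (gen_traj P pol2 h0 n s)"
proof (induction n arbitrary: h0 s k)
  case (Suc n)
  show ?case
  proof (cases k)
    case 0
    then have "guarded_prefix G h0 k = (\<lambda>_. Some [])" by (auto simp: guarded_prefix_def)
    then show ?thesis by simp
  next
    case (Suc k')
    have step: "map_pmf (guarded_prefix G h0 k) (gen_traj P pol h0 (Suc n) s) =
        pol h0 s \<bind> (\<lambda>a. P h0 s a \<bind> (\<lambda>s'. map_pmf (\<lambda>rest. guarded_prefix G h0 k ((s, a) # rest))
          (gen_traj P pol (Suc h0) n s')))" for pol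
      by (simp add: map_pmf_def bind_assoc_pmf bind_return_pmf)
    show ?thesis
    proof (cases "G h0 s")
      case False
      then show ?thesis unfolding step by (simp add: Suc guarded_prefix_Cons)
    next
      case True
      have h0: "h0 \<in> {1..H}" using Suc.prems by auto
      have "map_pmf (\<lambda>rest. guarded_prefix G h0 k ((s, a) # rest)) (gen_traj P pol1 (Suc h0) n s')
          = map_pmf (\<lambda>rest. guarded_prefix G h0 k ((s, a) # rest)) (gen_traj P pol2 (Suc h0) n s')"
        if "a \<in> set_pmf (pol1 h0 s)" "s' \<in> set_pmf (P h0 s a)" for a s'
      proof -
        have "s' \<in> S" using that actions[OF h0 Suc.prems(1) True] P h0 Suc.prems(1) by blast
        then have "map_pmf (guarded_prefix G (Suc h0) k') (gen_traj P pol1 (Suc h0) n s')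
            = map_pmf (guarded_prefix G (Suc h0) k') (gen_traj P pol2 (Suc h0) n s')"
          using Suc.IH Suc.prems by simp
        then show ?thesis
          by (simp add: Suc guarded_prefix_Cons True pmf.map_comp[symmetric, unfolded o_def]
              flip: map_pmf_compose)
      qed
      then show ?thesis
        unfolding step agree[OF h0 Suc.prems(1) True, symmetric] by (intro bind_pmf_cong) auto
    qed
  qed
qed simp

definition abs_seen :: "(nat \<Rightarrow> nat \<Rightarrow> nat) \<Rightarrow> traj list \<Rightarrow> nat \<Rightarrow> nat set" where
  "abs_seen \<phi> D l = {\<phi> l (fst (tr ! (l - 1))) | tr. tr \<in> set D}"

abbreviation visits :: "(nat \<Rightarrow> nat \<Rightarrow> nat) \<Rightarrow> nat \<Rightarrow> nat \<Rightarrow> nat \<Rightarrow> traj \<Rightarrow> bool" where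
  "visits \<phi> h x a tr \<equiv> \<phi> h (fst (tr ! (h - 1))) = x \<and> snd (tr ! (h - 1)) = a"

abbreviation visits_with :: "(nat \<Rightarrow> nat \<Rightarrow> nat) \<Rightarrow> (nat \<Rightarrow> traj \<Rightarrow> bool) \<Rightarrow> nat \<times> nat \<times> nat \<Rightarrow> traj \<Rightarrow> bool" where
  "visits_with \<phi> F \<equiv> \<lambda>(h, x, a) tr. visits \<phi> h x a tr \<and> F h tr"

lemma visits_in_Tr_eq_guarded_prefix_vimage:
  assumes "1 \<le> h"
  shows "{tr. visits \<phi> h x a tr \<and> in_Tr \<phi> D h tr} =
    guarded_prefix (\<lambda>l s. \<phi> l s \<in> abs_seen \<phi> D l) 1 h -` {Some p | p. visits \<phi> h x a p}"
proof -
  have "in_Tr \<phi> D h tr \<longleftrightarrow> (\<forall>i<h. \<phi> (Suc i) (fst (tr ! i)) \<in> abs_seen \<phi> D (Suc i))" for tr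
    unfolding in_Tr_def abs_seen_def image_Suc_lessThan[symmetric] by auto
  then show ?thesis
    using assms by (auto simp: guarded_prefix_def)
qed

lemma sum_prob_visits_le:
  assumes "finite X" "finite A"
  shows "(\<Sum>x\<in>X. \<Sum>a\<in>A. measure_pmf.prob M {tr. visits \<phi> h x a tr \<and> F tr}) \<le> measure_pmf.prob M {tr. F tr}"
proof -
  let ?v = "\<lambda>tr. (\<phi> h (fst (tr ! (h - 1))), snd (tr ! (h - 1)))"
  have "(\<Sum>x\<in>X. \<Sum>a\<in>A. measure_pmf.prob M {tr. visits \<phi> h x a tr \<and> F tr})
      = (\<Sum>xa\<in>X \<times> A. measure_pmf.prob M {tr. ?v tr = xa \<and> F tr})"
    by (simp add: sum.cartesian_product split_def prod_eq_iff)
  also have "\<dots> = measure_pmf.prob M {tr. ?v tr \<in> X \<times> A \<and> F tr}"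
    using assms by (intro measure_pmf_prob_preimage_eq_sum[symmetric]) auto
  also have "\<dots> \<le> measure_pmf.prob M {tr. F tr}"
    by (intro measure_pmf.finite_measure_mono) auto
  finally show ?thesis .
qed

lemma est_eq_empirical_freqs:
  assumes "m = 2 * length D1c"
  shows "est \<phi> m D1 D1c Denv h x a =
    real (length (filter (\<lambda>tr. visits \<phi> h x a tr \<and> in_Tr \<phi> D1 h tr) Denv)) / length Denv
    + real (length (filter (\<lambda>tr. visits \<phi> h x a tr \<and> \<not> in_Tr \<phi> D1 h tr) D1c)) / length D1c"
  using assms by (simp add: est_def)

section \<open>Error analysis for a fixed setting\<close>

locale abstract_bc_setting =
  fixes S A X :: "nat set" and \<rho> :: "nat pmf" and P :: "nat \<Rightarrow> nat \<Rightarrow> nat \<Rightarrow> nat pmf"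
    and r :: "nat \<Rightarrow> nat \<Rightarrow> nat \<Rightarrow> real" and \<pi>E \<phi> :: "nat \<Rightarrow> nat \<Rightarrow> nat" and H :: nat
  assumes valid: "valid_setting S A X \<rho> P r \<pi>E \<phi> H"
begin

abbreviation expert :: "traj pmf" where
  "expert \<equiv> traj_dist \<rho> P (det_policy \<pi>E) H"

abbreviation bc_traj :: "traj list \<Rightarrow> traj pmf" where
  "bc_traj D1 \<equiv> traj_dist \<rho> P (lift_policy (abs_bc A \<phi> D1) \<phi>) H"

lemma finite_S: "finite S" and finite_A: "finite A" and finite_X: "finite X" and X_nonempty: "X \<noteq> {}"
  and set_pmf_\<rho>: "set_pmf \<rho> \<subseteq> S"
  and set_pmf_P: "\<forall>h\<in>{1..H}. \<forall>s\<in>S. \<forall>a\<in>A. set_pmf (P h s a) \<subseteq> S"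
  and \<pi>E_in_A: "\<forall>h\<in>{1..H}. \<forall>s\<in>S. \<pi>E h s \<in> A"
  and \<phi>_in_X_Suc: "\<forall>h\<in>{1..Suc H}. \<forall>s\<in>S. \<phi> h s \<in> X"
  using valid unfolding valid_setting_def by blast+

lemma \<phi>_in_X: "h \<in> {1..H} \<Longrightarrow> s \<in> S \<Longrightarrow> \<phi> h s \<in> X"
  using \<phi>_in_X_Suc by auto

lemma \<pi>E_abs_irrelevant:
  "h \<in> {1..H} \<Longrightarrow> s1 \<in> S \<Longrightarrow> s2 \<in> S \<Longrightarrow> \<phi> h s1 = \<phi> h s2 \<Longrightarrow> \<pi>E h s1 = \<pi>E h s2"
  using valid unfolding valid_setting_def by (elim conjE) blast

lemma expert_step_support:
  assumes "tr \<in> set_pmf expert" "h \<in> {1..H}"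
  shows "fst (tr ! (h - 1)) \<in> S \<and> snd (tr ! (h - 1)) = \<pi>E h (fst (tr ! (h - 1)))"
proof -
  obtain s where "s \<in> S" "tr \<in> set_pmf (gen_traj P (det_policy \<pi>E) 1 H s)"
    using assms(1) set_pmf_\<rho> by (auto simp: traj_dist_def)
  from set_pmf_gen_traj_det_policy[OF set_pmf_P \<pi>E_in_A this(1) _ _ this(2)] assms(2)
  show ?thesis by (cases h) auto
qed

text \<open>On a visited abstract state the BC policy replays recorded expert actions, and these
  all coincide because the expert action depends on the abstract state only.\<close>

lemma lift_abs_bc_eq_expert:
  assumes D1: "set D1 \<subseteq> set_pmf expert" and l: "l \<in> {1..H}" and s: "s \<in> S"
    and seen: "\<phi> l s \<in> abs_seen \<phi> D1 l"
  shows "lift_policy (abs_bc A \<phi> D1) \<phi> l s = det_policy \<pi>E l s"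
proof -
  let ?F = "filter (\<lambda>tr. \<phi> l (fst (tr ! (l - 1))) = \<phi> l s) D1"
  have nonempty: "?F \<noteq> []"
    using seen by (auto simp: abs_seen_def filter_empty_conv)
  have "snd (tr ! (l - 1)) = \<pi>E l s" if "tr \<in> set ?F" for tr
    using that D1 expert_step_support[OF _ l] \<pi>E_abs_irrelevant[OF l _ s] by fastforce
  then have "set_pmf (pmf_of_multiset (mset (map (\<lambda>tr. snd (tr ! (l - 1))) ?F))) \<subseteq> {\<pi>E l s}"
    using nonempty by (subst set_pmf_of_multiset) (auto simp: filter_empty_conv)
  moreover have "cnt_x \<phi> D1 l (\<phi> l s) > 0"
    using nonempty by (simp add: cnt_x_def)
  ultimately show ?thesis
    by (simp add: lift_policy_def abs_bc_def det_policy_def set_pmf_subset_singleton)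
qed

lemma guarded_prefix_expert_eq_bc_traj:
  assumes "set D1 \<subseteq> set_pmf expert"
  shows "map_pmf (guarded_prefix (\<lambda>l s. \<phi> l s \<in> abs_seen \<phi> D1 l) 1 k) expert
       = map_pmf (guarded_prefix (\<lambda>l s. \<phi> l s \<in> abs_seen \<phi> D1 l) 1 k) (bc_traj D1)"
  unfolding traj_dist_def map_bind_pmf
proof (intro bind_pmf_cong refl)
  fix s assume "s \<in> set_pmf \<rho>"
  then have s: "s \<in> S" using set_pmf_\<rho> by blast
  show "map_pmf (guarded_prefix (\<lambda>l s. \<phi> l s \<in> abs_seen \<phi> D1 l) 1 k) (gen_traj P (det_policy \<pi>E) 1 H s)
      = map_pmf (guarded_prefix (\<lambda>l s. \<phi> l s \<in> abs_seen \<phi> D1 l) 1 k)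
          (gen_traj P (lift_policy (abs_bc A \<phi> D1) \<phi>) 1 H s)"
  proof (rule map_pmf_guarded_prefix_gen_traj_cong[OF set_pmf_P _ _ s])
    show "det_policy \<pi>E l s = lift_policy (abs_bc A \<phi> D1) \<phi> l s"
      if "l \<in> {1..H}" "s \<in> S" "\<phi> l s \<in> abs_seen \<phi> D1 l" for l s
      using lift_abs_bc_eq_expert[OF assms that] by simp
    show "set_pmf (det_policy \<pi>E l s) \<subseteq> A" if "l \<in> {1..H}" "s \<in> S" for l s
      using \<pi>E_in_A that by (simp add: det_policy_def)
  qed simp_all
qed

lemma prob_bc_traj_visits_in_Tr:
  assumes "set D1 \<subseteq> set_pmf expert" "1 \<le> h"
  shows "measure_pmf.prob (bc_traj D1) {tr. visits \<phi> h x a tr \<and> in_Tr \<phi> D1 h tr}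
       = measure_pmf.prob expert {tr. visits \<phi> h x a tr \<and> in_Tr \<phi> D1 h tr}"
  unfolding visits_in_Tr_eq_guarded_prefix_vimage[OF assms(2)]
  by (simp only: measure_map_pmf[symmetric] guarded_prefix_expert_eq_bc_traj[OF assms(1)])

text \<open>If no state of \<open>S\<close> is mapped to \<open>x\<close>, the choice below is arbitrary; the expert then
  never visits \<open>x\<close>, so every action has probability zero there.\<close>

definition abs_expert_action :: "nat \<Rightarrow> nat \<Rightarrow> nat" where
  "abs_expert_action h x = \<pi>E h (SOME s. s \<in> S \<and> \<phi> h s = x)"

lemma prob_visits_other_action:
  assumes "h \<in> {1..H}" "a \<noteq> abs_expert_action h x"
  shows "measure_pmf.prob expert {tr. visits \<phi> h x a tr \<and> F tr} = 0"
proof -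
  have "\<not> visits \<phi> h x a tr" if "tr \<in> set_pmf expert" for tr
  proof
    assume visit: "visits \<phi> h x a tr"
    let ?s = "fst (tr ! (h - 1))"
    have s: "?s \<in> S" "a = \<pi>E h ?s"
      using expert_step_support[OF that assms(1)] visit by auto
    then have "\<exists>s. s \<in> S \<and> \<phi> h s = x" using visit by blast
    then have "(SOME s. s \<in> S \<and> \<phi> h s = x) \<in> S \<and> \<phi> h (SOME s. s \<in> S \<and> \<phi> h s = x) = x"
      by (rule someI_ex)
    then have "abs_expert_action h x = \<pi>E h ?s"
      unfolding abs_expert_action_def using \<pi>E_abs_irrelevant[OF assms(1) _ s(1)] visit by auto
    then show False using assms(2) s(2) by simp
  qed
  then show ?thesis by (auto simp: measure_pmf_zero_iff)
qed

lemma card_visits_support_le: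
  "card {i \<in> {1..H} \<times> X \<times> A. measure_pmf.prob expert {tr. visits_with \<phi> F i tr} \<noteq> 0} \<le> H * card X"
proof -
  have "i \<in> (\<lambda>(h, x). (h, x, abs_expert_action h x)) ` ({1..H} \<times> X)"
    if "i \<in> {1..H} \<times> X \<times> A" "measure_pmf.prob expert {tr. visits_with \<phi> F i tr} \<noteq> 0" for i
  proof -
    obtain h x a where i: "i = (h, x, a)" by (cases i)
    show ?thesis
      using that prob_visits_other_action[of h a x "F h"] unfolding i
      by (auto intro!: image_eqI[where x="(h, x)"])
  qed
  then have "card {i \<in> {1..H} \<times> X \<times> A. measure_pmf.prob expert {tr. visits_with \<phi> F i tr} \<noteq> 0}
      \<le> card ((\<lambda>(h, x). (h, x, abs_expert_action h x)) ` ({1..H} \<times> X))"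
    using finite_X by (intro card_mono) auto
  also have "\<dots> \<le> H * card X"
    using card_image_le[of "{1..H} \<times> X"] finite_X by (simp add: card_cartesian_product)
  finally show ?thesis .
qed

lemma abs_occ_eq_prob_visits:
  assumes "h \<in> {1..H}"
  shows "abs_occ S \<rho> P \<pi>E \<phi> H h x a = measure_pmf.prob expert {tr. visits \<phi> h x a tr}"
proof -
  have "abs_occ S \<rho> P \<pi>E \<phi> H h x a
      = (\<Sum>s\<in>{s\<in>S. \<phi> h s = x}. measure_pmf.prob expert {tr. fst (tr ! (h - 1)) = s \<and> snd (tr ! (h - 1)) = a})"
    unfolding abs_occ_def occ_def by (intro sum.cong refl arg_cong[where f="measure_pmf.prob _"]) auto
  also have "\<dots> = measure_pmf.prob expert {tr. fst (tr ! (h - 1)) \<in> {s\<in>S. \<phi> h s = x} \<and> snd (tr ! (h - 1)) = a}"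
    using measure_pmf_prob_preimage_eq_sum[of "{s\<in>S. \<phi> h s = x}" expert "\<lambda>tr. fst (tr ! (h - 1))"
        "\<lambda>tr. snd (tr ! (h - 1)) = a"] finite_S
    by simp
  also have "\<dots> = measure_pmf.prob expert {tr. visits \<phi> h x a tr}"
    using expert_step_support[OF _ assms] by (intro measure_pmf.finite_measure_eq_AE AE_pmfI) auto
  finally show ?thesis .
qed

lemma abs_occ_split:
  assumes "h \<in> {1..H}"
  shows "abs_occ S \<rho> P \<pi>E \<phi> H h x a =
     measure_pmf.prob expert {tr. visits \<phi> h x a tr \<and> in_Tr \<phi> D1 h tr}
   + measure_pmf.prob expert {tr. visits \<phi> h x a tr \<and> \<not> in_Tr \<phi> D1 h tr}"
proof -
  have "{tr. visits \<phi> h x a tr} =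
      {tr. visits \<phi> h x a tr \<and> in_Tr \<phi> D1 h tr} \<union> {tr. visits \<phi> h x a tr \<and> \<not> in_Tr \<phi> D1 h tr}"
    by auto
  then show ?thesis
    unfolding abs_occ_eq_prob_visits[OF assms] by (simp only:) (rule measure_pmf.finite_measure_Union; auto)
qed

definition covers :: "real \<Rightarrow> traj list \<Rightarrow> bool" where
  "covers \<tau> D1 \<longleftrightarrow> (\<forall>l\<in>{1..H}. \<forall>x\<in>X.
     \<tau> \<le> measure_pmf.prob expert {tr. \<phi> l (fst (tr ! (l - 1))) = x} \<longrightarrow> x \<in> abs_seen \<phi> D1 l)"

lemma prob_not_covers:
  "measure_pmf.prob (replicate_pmf k expert) {D1. \<not> covers \<tau> D1} \<le> H * card X * exp (- \<tau> * k)"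
proof -
  let ?d = "\<lambda>l x. measure_pmf.prob expert {tr. \<phi> l (fst (tr ! (l - 1))) = x}"
  let ?miss = "\<lambda>(l, x). {D1. \<tau> \<le> ?d l x \<and> x \<notin> abs_seen \<phi> D1 l}"
  have "measure_pmf.prob (replicate_pmf k expert) {D1. \<not> covers \<tau> D1}
      = measure_pmf.prob (replicate_pmf k expert) (\<Union>i\<in>{1..H} \<times> X. ?miss i)"
    unfolding covers_def by (intro arg_cong[where f="measure_pmf.prob _"]) auto
  also have "\<dots> \<le> (\<Sum>i\<in>{1..H} \<times> X. measure_pmf.prob (replicate_pmf k expert) (?miss i))"
    using finite_X by (intro measure_pmf.finite_measure_subadditive_finite) auto
  also have "\<dots> \<le> (\<Sum>i\<in>{1..H} \<times> X. exp (- \<tau> * k))"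
  proof (intro sum_mono)
    fix i assume "i \<in> {1..H} \<times> X"
    obtain l x where i: "i = (l, x)" by fastforce
    show "measure_pmf.prob (replicate_pmf k expert) (?miss i) \<le> exp (- \<tau> * k)"
    proof (cases "\<tau> \<le> ?d l x")
      case True
      have "measure_pmf.prob (replicate_pmf k expert) (?miss i)
          = measure_pmf.prob (replicate_pmf k expert) {D1. \<forall>tr\<in>set D1. \<not> \<phi> l (fst (tr ! (l - 1))) = x}"
        using True by (intro arg_cong[where f="measure_pmf.prob _"]) (auto simp: i abs_seen_def)
      also have "\<dots> \<le> exp (- ?d l x * k)"
        by (rule prob_replicate_pmf_never_le)
      also have "\<dots> \<le> exp (- \<tau> * k)"
        using True by (simp add: mult_right_mono)
      finally show ?thesis .
    qed (simp add: i)
  qed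
  also have "\<dots> = H * card X * exp (- \<tau> * k)"
    by (simp add: card_cartesian_product)
  finally show ?thesis .
qed

lemma prob_not_in_Tr_le:
  assumes "covers \<tau> D1" "0 \<le> \<tau>" "h \<le> H"
  shows "measure_pmf.prob expert {tr. \<not> in_Tr \<phi> D1 h tr} \<le> real H * card X * \<tau>"
proof -
  let ?unseen = "\<lambda>l. {tr. \<phi> l (fst (tr ! (l - 1))) \<notin> abs_seen \<phi> D1 l}"
  have "measure_pmf.prob expert {tr. \<not> in_Tr \<phi> D1 h tr} = measure_pmf.prob expert (\<Union>l\<in>{1..h}. ?unseen l)"
    unfolding in_Tr_def abs_seen_def by (intro arg_cong[where f="measure_pmf.prob _"]) auto
  also have "\<dots> \<le> (\<Sum>l\<in>{1..h}. measure_pmf.prob expert (?unseen l))"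
    by (intro measure_pmf.finite_measure_subadditive_finite) auto
  also have "\<dots> \<le> (\<Sum>l\<in>{1..h}. real (card X) * \<tau>)"
  proof (intro sum_mono)
    fix l assume l: "l \<in> {1..h}"
    then have l': "l \<in> {1..H}" using assms(3) by auto
    have "measure_pmf.prob expert (?unseen l)
        = measure_pmf.prob expert {tr. \<phi> l (fst (tr ! (l - 1))) \<in> X - abs_seen \<phi> D1 l \<and> True}"
      using expert_step_support[OF _ l'] \<phi>_in_X[OF l']
      by (intro measure_pmf.finite_measure_eq_AE AE_pmfI) auto
    also have "\<dots> = (\<Sum>x\<in>X - abs_seen \<phi> D1 l. measure_pmf.prob expert {tr. \<phi> l (fst (tr ! (l - 1))) = x \<and> True})"
      using finite_X by (intro measure_pmf_prob_preimage_eq_sum) auto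
    also have "\<dots> \<le> (\<Sum>x\<in>X - abs_seen \<phi> D1 l. \<tau>)"
      using assms(1) l' by (intro sum_mono) (force simp: covers_def)
    also have "\<dots> \<le> real (card X) * \<tau>"
      using finite_X assms(2) by (simp add: card_mono mult_right_mono)
    finally show "measure_pmf.prob expert (?unseen l) \<le> real (card X) * \<tau>" .
  qed
  also have "\<dots> \<le> real H * card X * \<tau>"
    using assms(2,3) by (simp add: mult_right_mono mult.assoc)
  finally show ?thesis .
qed

lemma sum_abs_freq_dev_le:
  fixes \<beta> L :: real
  assumes close: "counts_close \<beta> L ({1..H} \<times> X \<times> A) (visits_with \<phi> F) expert D"
    and "D \<noteq> []" "h \<in> {1..H}" "0 < \<beta>" "0 \<le> L"
  shows "(\<Sum>x\<in>X. \<Sum>a\<in>A. \<bar>real (length (filter (\<lambda>tr. visits \<phi> h x a tr \<and> F h tr) D)) / length D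
            - measure_pmf.prob expert {tr. visits \<phi> h x a tr \<and> F h tr}\<bar>)
    \<le> \<beta> * measure_pmf.prob expert {tr. F h tr} + card X * (L / (\<beta> * length D))"
proof -
  let ?q = "\<lambda>x a. measure_pmf.prob expert {tr. visits \<phi> h x a tr \<and> F h tr}"
  have "(\<Sum>x\<in>X. \<Sum>a\<in>A. \<bar>real (length (filter (\<lambda>tr. visits \<phi> h x a tr \<and> F h tr) D)) / length D - ?q x a\<bar>)
      \<le> \<beta> * (\<Sum>x\<in>X. \<Sum>a\<in>A. ?q x a) + card X * (L / (\<beta> * length D))"
  proof (rule sum_abs_le_single_support[OF finite_A])
    show "?q x a = 0" if "a \<noteq> abs_expert_action h x" for x a
      using prob_visits_other_action[OF assms(3) that] .
    show "\<bar>real (length (filter (\<lambda>tr. visits \<phi> h x a tr \<and> F h tr) D)) / length D - ?q x a\<bar>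
        \<le> (if ?q x a = 0 then 0 else \<beta> * ?q x a + L / (\<beta> * length D))" if "x \<in> X" "a \<in> A" for x a
      using close assms(2-4) that by (intro count_close_imp_abs_diff_le) (auto simp: counts_close_def)
  qed (use assms in simp)
  also have "(\<Sum>x\<in>X. \<Sum>a\<in>A. ?q x a) \<le> measure_pmf.prob expert {tr. F h tr}"
    by (rule sum_prob_visits_le[OF finite_X finite_A])
  finally show ?thesis using assms(4) by simp
qed

lemma counts_close_bc_traj_iff:
  assumes "set D1 \<subseteq> set_pmf expert"
  shows "counts_close \<beta> L ({1..H} \<times> X \<times> A) (visits_with \<phi> (in_Tr \<phi> D1)) (bc_traj D1) D
     \<longleftrightarrow> counts_close \<beta> L ({1..H} \<times> X \<times> A) (visits_with \<phi> (in_Tr \<phi> D1)) expert D"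
  using prob_bc_traj_visits_in_Tr[OF assms] by (auto simp: counts_close_def)

lemma err_at_step_le:
  fixes \<beta>1 \<beta>2 L \<tau> :: real
  assumes D1: "set D1 \<subseteq> set_pmf expert" and cov: "covers \<tau> D1" "0 \<le> \<tau>"
    and held_out: "counts_close \<beta>2 L ({1..H} \<times> X \<times> A) (visits_with \<phi> (\<lambda>h tr. \<not> in_Tr \<phi> D1 h tr)) expert D1c"
    and env: "counts_close \<beta>1 L ({1..H} \<times> X \<times> A) (visits_with \<phi> (in_Tr \<phi> D1)) (bc_traj D1) Denv"
    and "D1c \<noteq> []" "Denv \<noteq> []" "m = 2 * length D1c" "0 < \<beta>1" "0 < \<beta>2" "0 \<le> L"
    and h: "h \<in> {1..H}"
  shows "(\<Sum>x\<in>X. \<Sum>a\<in>A. \<bar>est \<phi> m D1 D1c Denv h x a - abs_occ S \<rho> P \<pi>E \<phi> H h x a\<bar>)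
    \<le> (\<beta>1 + card X * (L / (\<beta>1 * length Denv))) + (\<beta>2 * (H * card X * \<tau>) + card X * (L / (\<beta>2 * length D1c)))"
proof -
  let ?d = "\<lambda>D F x a. real (length (filter (\<lambda>tr. visits \<phi> h x a tr \<and> F tr) D)) / length D
                      - measure_pmf.prob expert {tr. visits \<phi> h x a tr \<and> F tr}"
  have "\<bar>est \<phi> m D1 D1c Denv h x a - abs_occ S \<rho> P \<pi>E \<phi> H h x a\<bar>
      \<le> \<bar>?d Denv (in_Tr \<phi> D1 h) x a\<bar> + \<bar>?d D1c (\<lambda>tr. \<not> in_Tr \<phi> D1 h tr) x a\<bar>" for x a
    unfolding est_eq_empirical_freqs[OF assms(8)] abs_occ_split[OF h, of x a D1]
    by (rule abs_diff_triangle_ineq)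
  then have "(\<Sum>x\<in>X. \<Sum>a\<in>A. \<bar>est \<phi> m D1 D1c Denv h x a - abs_occ S \<rho> P \<pi>E \<phi> H h x a\<bar>)
      \<le> (\<Sum>x\<in>X. \<Sum>a\<in>A. \<bar>?d Denv (in_Tr \<phi> D1 h) x a\<bar>) + (\<Sum>x\<in>X. \<Sum>a\<in>A. \<bar>?d D1c (\<lambda>tr. \<not> in_Tr \<phi> D1 h tr) x a\<bar>)"
    by (simp add: sum.distrib[symmetric] sum_mono)
  also have "(\<Sum>x\<in>X. \<Sum>a\<in>A. \<bar>?d Denv (in_Tr \<phi> D1 h) x a\<bar>)
      \<le> \<beta>1 * measure_pmf.prob expert {tr. in_Tr \<phi> D1 h tr} + card X * (L / (\<beta>1 * length Denv))"
    using env assms(7,9,11) h unfolding counts_close_bc_traj_iff[OF D1]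
    by (intro sum_abs_freq_dev_le[where F="in_Tr \<phi> D1"]) auto
  also have "\<beta>1 * measure_pmf.prob expert {tr. in_Tr \<phi> D1 h tr} \<le> \<beta>1"
    using assms(9) by (simp add: mult_left_le)
  also have "(\<Sum>x\<in>X. \<Sum>a\<in>A. \<bar>?d D1c (\<lambda>tr. \<not> in_Tr \<phi> D1 h tr) x a\<bar>)
      \<le> \<beta>2 * measure_pmf.prob expert {tr. \<not> in_Tr \<phi> D1 h tr} + card X * (L / (\<beta>2 * length D1c))"
    using held_out assms(6,10,11) h
    by (intro sum_abs_freq_dev_le[where F="\<lambda>h tr. \<not> in_Tr \<phi> D1 h tr"]) auto
  also have "\<beta>2 * measure_pmf.prob expert {tr. \<not> in_Tr \<phi> D1 h tr} \<le> \<beta>2 * (H * card X * \<tau>)"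
    using prob_not_in_Tr_le[OF cov] h assms(10) by (intro mult_left_mono) auto
  finally show ?thesis by simp
qed

lemma total_err_le:
  fixes \<beta>1 \<beta>2 L \<tau> :: real
  assumes D1: "set D1 \<subseteq> set_pmf expert" and cov: "covers \<tau> D1" "0 \<le> \<tau>"
    and held_out: "counts_close \<beta>2 L ({1..H} \<times> X \<times> A) (visits_with \<phi> (\<lambda>h tr. \<not> in_Tr \<phi> D1 h tr)) expert D1c"
    and env: "counts_close \<beta>1 L ({1..H} \<times> X \<times> A) (visits_with \<phi> (in_Tr \<phi> D1)) (bc_traj D1) Denv"
    and "D1c \<noteq> []" "Denv \<noteq> []" "m = 2 * length D1c" "0 < \<beta>1" "0 < \<beta>2" "0 \<le> L"
  shows "total_err S A X \<rho> P \<pi>E \<phi> H m D1 D1c Denv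
    \<le> H * (\<beta>1 + card X * (L / (\<beta>1 * length Denv)))
     + H * (\<beta>2 * (H * card X * \<tau>) + card X * (L / (\<beta>2 * length D1c)))"
proof -
  have "total_err S A X \<rho> P \<pi>E \<phi> H m D1 D1c Denv
      \<le> (\<Sum>h=1..H. (\<beta>1 + card X * (L / (\<beta>1 * length Denv)))
                    + (\<beta>2 * (H * card X * \<tau>) + card X * (L / (\<beta>2 * length D1c))))"
    unfolding total_err_def using err_at_step_le[OF assms] by (intro sum_mono) auto
  then show ?thesis by (simp add: algebra_simps)
qed

lemma prob_sample_bad_le:
  assumes "0 < \<beta>1" "\<beta>1 \<le> 1" "0 < \<beta>2" "\<beta>2 \<le> 1"
  shows "measure_pmf.prob (sample_law A \<rho> P \<pi>E \<phi> H m n')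
      {(D1, D1c, Denv). \<not> covers \<tau> D1
         \<or> \<not> counts_close \<beta>2 L ({1..H} \<times> X \<times> A) (visits_with \<phi> (\<lambda>h tr. \<not> in_Tr \<phi> D1 h tr)) expert D1c
         \<or> \<not> counts_close \<beta>1 L ({1..H} \<times> X \<times> A) (visits_with \<phi> (in_Tr \<phi> D1)) (bc_traj D1) Denv}
    \<le> H * card X * exp (- \<tau> * real (m div 2)) + (2 * real (H * card X) * exp (- L) + 2 * real (H * card X) * exp (- L))"
  unfolding sample_law_def
proof (rule prob_bind3_union_le)
  show "measure_pmf.prob (replicate_pmf (m div 2) expert) {D1. \<not> covers \<tau> D1}
      \<le> H * card X * exp (- \<tau> * real (m div 2))"
    by (rule prob_not_covers)
  have finite_I: "finite ({1..H} \<times> X \<times> A)"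
    using finite_X finite_A by simp
  show "measure_pmf.prob (replicate_pmf (m div 2) expert)
      {D1c. \<not> counts_close \<beta>2 L ({1..H} \<times> X \<times> A) (visits_with \<phi> (\<lambda>h tr. \<not> in_Tr \<phi> D1 h tr)) expert D1c}
      \<le> 2 * real (H * card X) * exp (- L)" for D1
    by (rule prob_not_counts_close[OF finite_I assms(3,4) card_visits_support_le])
  show "measure_pmf.prob (replicate_pmf n' (bc_traj D1))
      {Denv. \<not> counts_close \<beta>1 L ({1..H} \<times> X \<times> A) (visits_with \<phi> (in_Tr \<phi> D1)) (bc_traj D1) Denv}
      \<le> 2 * real (H * card X) * exp (- L)" if "D1 \<in> set_pmf (replicate_pmf (m div 2) expert)" for D1
  proof (rule prob_not_counts_close[OF finite_I assms(1,2)])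
    have D1: "set D1 \<subseteq> set_pmf expert" using that by (auto simp: set_replicate_pmf)
    have "measure_pmf.prob (bc_traj D1) {tr. visits_with \<phi> (in_Tr \<phi> D1) i tr}
        = measure_pmf.prob expert {tr. visits_with \<phi> (in_Tr \<phi> D1) i tr}" if "i \<in> {1..H} \<times> X \<times> A" for i
      using that prob_bc_traj_visits_in_Tr[OF D1] by auto
    then have "{i \<in> {1..H} \<times> X \<times> A. measure_pmf.prob (bc_traj D1) {tr. visits_with \<phi> (in_Tr \<phi> D1) i tr} \<noteq> 0}
        = {i \<in> {1..H} \<times> X \<times> A. measure_pmf.prob expert {tr. visits_with \<phi> (in_Tr \<phi> D1) i tr} \<noteq> 0}"
      by auto
    then show "card {i \<in> {1..H} \<times> X \<times> A.
        measure_pmf.prob (bc_traj D1) {tr. visits_with \<phi> (in_Tr \<phi> D1) i tr} \<noteq> 0} \<le> H * card X"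
      using card_visits_support_le[of "in_Tr \<phi> D1"] by simp
  qed
qed simp_all

lemma total_err_le_with_high_prob:
  fixes \<beta>1 \<beta>2 L B :: real and k n' :: nat
  assumes "0 < \<beta>1" "\<beta>1 \<le> 1" "0 < \<beta>2" "\<beta>2 \<le> 1" "0 \<le> L" "m = 2 * k" "0 < k" "0 < n'"
    and bound: "H * (\<beta>1 + card X * (L / (\<beta>1 * n'))) + H * (\<beta>2 * (H * card X * (L / k)) + card X * (L / (\<beta>2 * k)))
      \<le> B"
  shows "1 - 5 * H * card X * exp (- L) \<le> measure_pmf.prob (sample_law A \<rho> P \<pi>E \<phi> H m n')
      {(D1, D1c, Denv). total_err S A X \<rho> P \<pi>E \<phi> H m D1 D1c Denv \<le> B}"
    (is "_ \<le> measure_pmf.prob ?law ?good")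
proof -
  define \<tau> where "\<tau> = L / k"
  let ?bad = "{(D1, D1c, Denv). \<not> covers \<tau> D1
         \<or> \<not> counts_close \<beta>2 L ({1..H} \<times> X \<times> A) (visits_with \<phi> (\<lambda>h tr. \<not> in_Tr \<phi> D1 h tr)) expert D1c
         \<or> \<not> counts_close \<beta>1 L ({1..H} \<times> X \<times> A) (visits_with \<phi> (in_Tr \<phi> D1)) (bc_traj D1) Denv}"
  have "measure_pmf.prob ?law ?bad \<le> 5 * H * card X * exp (- L)"
    using prob_sample_bad_le[OF assms(1-4), of m n' \<tau> L] assms(6,7) by (simp add: \<tau>_def)
  moreover have "measure_pmf.prob ?law (- ?bad) \<le> measure_pmf.prob ?law ?good"
  proof (rule measure_pmf.finite_measure_mono_AE[OF AE_pmfI])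
    fix t assume t: "t \<in> set_pmf ?law"
    obtain D1 D1c Denv where t_eq: "t = (D1, D1c, Denv)" by (cases t)
    have "set D1 \<subseteq> set_pmf expert" "length D1c = k" "length Denv = n'"
      using t assms(6) unfolding t_eq sample_law_def by (auto simp: set_replicate_pmf)
    then show "t \<in> - ?bad \<longrightarrow> t \<in> ?good"
      using total_err_le[of D1 \<tau> \<beta>2 L D1c \<beta>1 Denv m] assms unfolding t_eq \<tau>_def by auto
  qed simp
  ultimately show ?thesis
    using measure_pmf.prob_compl[of ?bad ?law] by (simp add: Compl_eq_Diff_UNIV)
qed

end

section \<open>Choice of the parameters\<close>

lemma ln_confidence_bounds:
  fixes x \<delta> :: real
  assumes "5 \<le> x" "0 < \<delta>" "\<delta> < 1"
  shows "0 < ln (x / \<delta>)" "0 < ln (5 * (x / \<delta>))" "ln (5 * (x / \<delta>)) \<le> 2 * ln (x / \<delta>)"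
    and "5 * x * exp (- ln (5 * (x / \<delta>))) = \<delta>"
proof -
  have "5 \<le> x / \<delta>"
    using assms by (simp add: le_divide_eq)
  moreover have "ln (5 * (x / \<delta>)) = ln 5 + ln (x / \<delta>)"
    using assms by (subst ln_mult) auto
  ultimately show "0 < ln (x / \<delta>)" "0 < ln (5 * (x / \<delta>))" "ln (5 * (x / \<delta>)) \<le> 2 * ln (x / \<delta>)"
    by (simp_all add: order_less_le_trans[of 0 "ln 5"])
  show "5 * x * exp (- ln (5 * (x / \<delta>))) = \<delta>"
    using assms by (simp add: exp_minus field_simps)
qed

lemma env_error_le:
  fixes H K \<epsilon> L \<Lambda> n :: real
  assumes "0 < H" "0 \<le> K" "0 < \<epsilon>" "L \<le> 2 * \<Lambda>" "0 < n" "32 * (H\<^sup>2 * K / \<epsilon>\<^sup>2) * \<Lambda> \<le> n"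
  shows "H * (\<epsilon> / (4 * H) + K * (L / (\<epsilon> / (4 * H) * n))) \<le> \<epsilon> / 2"
proof -
  have "16 * H\<^sup>2 * K * L \<le> 16 * H\<^sup>2 * K * (2 * \<Lambda>)"
    using assms by (intro mult_left_mono) auto
  also have "\<dots> \<le> \<epsilon>\<^sup>2 * n"
    using assms(3,6) by (simp add: field_simps)
  finally have "16 * H\<^sup>2 * K * L \<le> \<epsilon>\<^sup>2 * n" .
  then show ?thesis
    using assms(1,3,5) by (simp add: field_simps power2_eq_square)
qed

lemma held_out_error_le:
  fixes H K \<epsilon> L \<Lambda> k :: real
  assumes "0 < H" "0 \<le> K" "0 < \<epsilon>" "L \<le> 2 * \<Lambda>" "0 < k" "32 * (H powr (3/2) * K / \<epsilon>) * \<Lambda> \<le> 2 * k"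
  shows "H * (1 / sqrt H * (H * K * (L / k)) + K * (L / (1 / sqrt H * k))) \<le> \<epsilon> / 2"
proof -
  define s where "s = sqrt H"
  have s: "0 < s" "H = s\<^sup>2" using assms(1) by (simp_all add: s_def)
  have "H powr (3/2) = H * H powr (1/2)"
    using powr_add[of H 1 "1/2"] assms(1) by simp
  then have "H powr (3/2) = s ^ 3"
    using assms(1) by (simp add: s_def powr_half_sqrt power3_eq_cube)
  then have "16 * (s ^ 3 * K * \<Lambda>) \<le> \<epsilon> * k"
    using assms(3,6) by (simp add: field_simps)
  moreover have "4 * s ^ 3 * K * L \<le> 4 * s ^ 3 * K * (2 * \<Lambda>)"
    using assms(2,4) s(1) by (intro mult_left_mono) auto
  moreover have "0 < \<epsilon> * k"
    using assms(3,5) by simp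
  ultimately have "4 * s ^ 3 * K * L \<le> \<epsilon> * k"
    by linarith
  then show ?thesis
    using s assms(5) by (simp add: field_simps power2_eq_square power3_eq_cube)
qed

context abstract_bc_setting
begin

lemma total_err_le_eps_with_high_prob:
  assumes "H \<ge> 5" "even m" "0 < \<epsilon>" "\<epsilon> < 1" "0 < \<delta>" "\<delta> < 1"
    and m: "real m \<ge> 32 * (real H powr (3/2) * real (card X) / \<epsilon>) * ln (real (card X) * real H / \<delta>)"
    and n': "real n' \<ge> 32 * (real H ^ 2 * real (card X) / \<epsilon> ^ 2) * ln (real (card X) * real H / \<delta>)"
  shows "measure_pmf.prob (sample_law A \<rho> P \<pi>E \<phi> H m n')
      {(D1, D1c, Denv). total_err S A X \<rho> P \<pi>E \<phi> H m D1 D1c Denv \<le> \<epsilon>} \<ge> 1 - \<delta>"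
proof -
  define L where "L = ln (5 * (real (card X) * real H / \<delta>))"
  define k where "k = m div 2"
  have "1 \<le> real (card X)" "5 \<le> real H"
    using finite_X X_nonempty assms(1) by (simp_all add: Suc_le_eq card_gt_0_iff)
  then have "5 \<le> real (card X) * real H"
    using mult_mono[of 1 "real (card X)" 5 "real H"] by simp
  note log = ln_confidence_bounds[OF this assms(5,6), folded L_def]
  have L: "0 \<le> L" "L \<le> 2 * ln (real (card X) * real H / \<delta>)"
    using log(2,3) by simp_all
  have \<delta>: "5 * H * card X * exp (- L) = \<delta>"
    using log(4) by (simp add: mult_ac)
  have "0 < 32 * (real H powr (3/2) * real (card X) / \<epsilon>) * ln (real (card X) * real H / \<delta>)"
    "0 < 32 * (real H ^ 2 * real (card X) / \<epsilon> ^ 2) * ln (real (card X) * real H / \<delta>)"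
    using log(1) assms(3) \<open>1 \<le> real (card X)\<close> \<open>5 \<le> real H\<close> by simp_all
  then have "0 < real m" "0 < real n'"
    using m n' by linarith+
  then have k: "0 < k" "m = 2 * k" "0 < n'"
    using assms(2) by (auto simp: k_def)
  have "real H * (\<epsilon> / (4 * real H) + card X * (L / (\<epsilon> / (4 * real H) * n')))
      + real H * (1 / sqrt H * (real (H * card X) * (L / k)) + card X * (L / (1 / sqrt H * k)))
    \<le> \<epsilon> / 2 + \<epsilon> / 2"
    using assms(1,3) L k m n' unfolding of_nat_mult by (intro add_mono env_error_le held_out_error_le) auto
  then show ?thesis
    using total_err_le_with_high_prob[of "\<epsilon> / (4 * real H)" "1 / sqrt H" L m k n' \<epsilon>] assms(1,3,4) L k \<delta>
    by (simp add: mult.assoc)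
qed

end

theorem lemma13:
  shows "\<exists>C::real. C > 0 \<and>
    (\<forall>(S::nat set) (A::nat set) (X::nat set) (\<rho>::nat pmf) (P::nat \<Rightarrow> nat \<Rightarrow> nat \<Rightarrow> nat pmf)
      (r::nat \<Rightarrow> nat \<Rightarrow> nat \<Rightarrow> real) (\<pi>E::nat \<Rightarrow> nat \<Rightarrow> nat) (\<phi>::nat \<Rightarrow> nat \<Rightarrow> nat)
      (H::nat) (m::nat) (n'::nat) (\<epsilon>::real) (\<delta>::real).
      valid_setting S A X \<rho> P r \<pi>E \<phi> H \<and> H \<ge> 5 \<and> even m \<and>
      0 < \<epsilon> \<and> \<epsilon> < 1 \<and> 0 < \<delta> \<and> \<delta> < 1 \<and>
      real m \<ge> C * (real H powr (3/2) * real (card X) / \<epsilon>) * ln (real (card X) * real H / \<delta>) \<and>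
      real n' \<ge> C * (real H ^ 2 * real (card X) / \<epsilon> ^ 2) * ln (real (card X) * real H / \<delta>)
      \<longrightarrow> measure_pmf.prob (sample_law A \<rho> P \<pi>E \<phi> H m n')
            {(D1, D1c, Denv). total_err S A X \<rho> P \<pi>E \<phi> H m D1 D1c Denv \<le> \<epsilon>} \<ge> 1 - \<delta>)"
proof (intro exI[of _ 32] conjI allI impI)
  fix S A X \<rho> P r \<pi>E \<phi> H m n' and \<epsilon> \<delta> :: real
  assume asm: "valid_setting S A X \<rho> P r \<pi>E \<phi> H \<and> H \<ge> 5 \<and> even m \<and>
      0 < \<epsilon> \<and> \<epsilon> < 1 \<and> 0 < \<delta> \<and> \<delta> < 1 \<and>
      real m \<ge> 32 * (real H powr (3/2) * real (card X) / \<epsilon>) * ln (real (card X) * real H / \<delta>) \<and>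
      real n' \<ge> 32 * (real H ^ 2 * real (card X) / \<epsilon> ^ 2) * ln (real (card X) * real H / \<delta>)"
  then interpret abstract_bc_setting S A X \<rho> P r \<pi>E \<phi> H
    by unfold_locales blast
  show "measure_pmf.prob (sample_law A \<rho> P \<pi>E \<phi> H m n')
      {(D1, D1c, Denv). total_err S A X \<rho> P \<pi>E \<phi> H m D1 D1c Denv \<le> \<epsilon>} \<ge> 1 - \<delta>"
    using asm by (intro total_err_le_eps_with_high_prob) auto
qed simp

end
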